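(* SeqPAV satisfies $\kappa$-group representation for $\kappa(\alpha,\lambda)=\lceil \frac{2(\lambda+1)^2}{\alpha^2}\rceil$. That is, for every rational $\alpha\in(0,1]$, every $\lambda\in\mathbb N$, every profile $P$, every ranking $r$ that SeqPAV may output on $P$ (under any tie-breaking), and every group $N'$ that is $(\alpha,\lambda)$-significant in $P$, we have $\mathrm{avg}(N',r_{\le k})\ge\lambda$ where $k=\lceil \frac{2(\lambda+1)^2}{\alpha^2}\rceil$.
   Context: Let $N=[n]$ be a finite set of voters and $A$ a finite set of $m$ alternatives; a profile $P=(A_1,\dots,A_n)$ gives each voter $i$ a non-empty approval set $A_i\subseteq A$. A ranking $r=(r_1,\dots,r_m)$ is a linear order of $A$, $r_{\le k}=\{r_1,\dots,r_k\}$, with $r_{\le k}=A$ for $k\ge m$. For nonempty $N'\subseteq N$ and $S\subseteq A$, $\mathrm{avg}(N',S)=\frac1{|N'|}\sum_{i\in N'}|A_i\cap S|$. The cohesiveness of $N'$ is $\lambda(N')=|\bigcap_{i\in N'}A_i|$; $N'$ is $(\alpha,\lambda)$-significant in $P$ if $|N'|=\lceil\alpha n\rceil$ and $\lambda(N')\ge\lambda$. For a weight vector $\mathbf w=(w_1,w_2,\dots)$ of nonnegative reals and $S\subseteq A$, let $w(S)=\sum_{i\in N}\sum_{j=1}^{|A_i\cap S|}w_j$. The rule $\mathbf w$-RAV builds $r$ iteratively from the empty ranking: at step $k\in[m]$ it appends an unranked alternative $a$ maximizing $w(r_{\le k-1}\cup\{a\})-w(r_{\le k-1})$ (ties broken arbitrarily).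 SeqPAV is $\mathbf w$-RAV with $\mathbf w=(1,\frac12,\frac13,\dots)$. *)

theory Defs
  imports "HOL-Analysis.Analysis"
begin

text \<open>A ranking is a list enumerating A without repetition;
its prefix of length k is set (take k r) (equal to A when k is at least m).\<close>

definition is_profile :: "'v set \<Rightarrow> 'a set \<Rightarrow> ('v \<Rightarrow> 'a set) \<Rightarrow> bool" where
  "is_profile N A P \<longleftrightarrow> finite N \<and> N \<noteq> {} \<and> finite A \<and>
     (\<forall>i\<in>N. P i \<noteq> {} \<and> P i \<subseteq> A)"

definition is_ranking :: "'a set \<Rightarrow> 'a list \<Rightarrow> bool" where
  "is_ranking A r \<longleftrightarrow> distinct r \<and> set r = A"

definition prefix_set :: "'a list \<Rightarrow> nat \<Rightarrow> 'a set" where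
  "prefix_set r k = set (take k r)"

definition avg :: "('v \<Rightarrow> 'a set) \<Rightarrow> 'v set \<Rightarrow> 'a set \<Rightarrow> real" where
  "avg P N' S = (\<Sum>i\<in>N'. real (card (P i \<inter> S))) / real (card N')"

definition cohesiveness :: "('v \<Rightarrow> 'a set) \<Rightarrow> 'v set \<Rightarrow> nat" where
  "cohesiveness P N' = card (\<Inter>i\<in>N'. P i)"

definition significant ::
  "'v set \<Rightarrow> ('v \<Rightarrow> 'a set) \<Rightarrow> real \<Rightarrow> nat \<Rightarrow> 'v set \<Rightarrow> bool" where
  "significant N P \<alpha> lam N' \<longleftrightarrow> N' \<subseteq> N \<and> N' \<noteq> {} \<and>
     int (card N') = \<lceil>\<alpha> * real (card N)\<rceil> \<and> cohesiveness P N' \<ge> lam"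

text \<open>w(S) for a weight vector w indexed from 1 (w 1 = w_1, ...).\<close>
definition wscore :: "(nat \<Rightarrow> real) \<Rightarrow> 'v set \<Rightarrow> ('v \<Rightarrow> 'a set) \<Rightarrow> 'a set \<Rightarrow> real" where
  "wscore w N P S = (\<Sum>i\<in>N. \<Sum>j=1..card (P i \<inter> S). w j)"

text \<open>r is a possible output of w-RAV (for some tie-breaking): at every step k+1 the
appended alternative maximizes the marginal gain among the unranked alternatives.\<close>
definition wrav_output ::
  "(nat \<Rightarrow> real) \<Rightarrow> 'v set \<Rightarrow> 'a set \<Rightarrow> ('v \<Rightarrow> 'a set) \<Rightarrow> 'a list \<Rightarrow> bool" where
  "wrav_output w N A P r \<longleftrightarrow> is_ranking A r \<and>
     (\<forall>k < length r. \<forall>a \<in> A - set (take k r).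
        wscore w N P (set (take k r) \<union> {a}) - wscore w N P (set (take k r))
        \<le> wscore w N P (set (take k r) \<union> {r ! k}) - wscore w N P (set (take k r)))"

definition pav_weights :: "nat \<Rightarrow> real" where
  "pav_weights j = 1 / real j"

definition seqpav_output :: "'v set \<Rightarrow> 'a set \<Rightarrow> ('v \<Rightarrow> 'a set) \<Rightarrow> 'a list \<Rightarrow> bool" where
  "seqpav_output = wrav_output pav_weights"

end

theory Submission
  imports Defs
begin

text \<open>Suppose the first k = \<lceil>2(\<lambda>+1)^2/\<alpha>^2\<rceil> alternatives ranked by SeqPAV give the
significant group N' an average of fewer than \<lambda> approved alternatives. Then at every step
some alternative approved by all of N' is still unranked, and by convexity of 1/(x+1) adding it
would raise the PAV score by more than |N'|/(\<lambda>+1); the greedy choice does at least as well,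
so after k steps the score exceeds k|N'|/(\<lambda>+1) \<ge> k \<alpha> n/(\<lambda>+1). On the other hand each voter
contributes a harmonic number H_j \<le> \<surd>(2k) with j \<le> k, so the score is at most n \<surd>(2k).
Together these force k < 2(\<lambda>+1)^2/\<alpha>^2.\<close>

lemma sum_pav_weights_le_sqrt: "(\<Sum>j=1..c. pav_weights j) \<le> sqrt (2 * real c)"
proof (induction c)
  case 0
  then show ?case by simp
next
  case (Suc c)
  have step: "sqrt (2 * real c) + 1 / (real c + 1) \<le> sqrt (2 * (real c + 1))"
  proof (cases "c = 0")
    case True
    then show ?thesis by simp
  next
    case False
    define a where "a = sqrt (2 * real c)"
    define b where "b = sqrt (2 * (real c + 1))"
    have "0 \<le> a" "a \<le> b" "0 < b" unfolding a_def b_def by auto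
    have "1 * 1 \<le> real c * real c" using False by (intro mult_mono) auto
    then have "2 * (real c + 1) \<le> (real c + 1)^2" by (simp add: power2_eq_square algebra_simps)
    then have b_le: "b \<le> real c + 1"
      unfolding b_def by (metis real_le_lsqrt of_nat_0_le_iff add_nonneg_nonneg zero_le_one)
    \<comment> \<open>b - a = 2/(a + b) \<ge> 1/b\<close>
    have "(b - a) * (a + b) = 2" unfolding a_def b_def by (simp add: algebra_simps)
    then have "(b - a) * (2 * b) \<ge> 2"
      using \<open>a \<le> b\<close> \<open>0 \<le> a\<close> by (smt (verit) mult_left_mono)
    then have "b - a \<ge> 1 / b" using \<open>0 < b\<close> by (simp add: field_simps)
    moreover have "1 / b \<ge> 1 / (real c + 1)" using b_le \<open>0 < b\<close> by (simp add: frac_le)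
    ultimately show ?thesis unfolding a_def b_def by linarith
  qed
  have "(\<Sum>j=1..Suc c. pav_weights j) = (\<Sum>j=1..c. pav_weights j) + 1 / (real c + 1)"
    by (simp add: pav_weights_def)
  also have "\<dots> \<le> sqrt (2 * real c) + 1 / (real c + 1)" using Suc by simp
  also have "\<dots> \<le> sqrt (2 * real (Suc c))" using step by (simp add: add.commute)
  finally show ?case .
qed

lemma sum_pav_weights_mono:
  "a \<le> b \<Longrightarrow> (\<Sum>j=1..a. pav_weights j) \<le> (\<Sum>j=1..b. pav_weights j)"
  by (rule sum_mono2) (auto simp: pav_weights_def)

lemma wscore_pav_le_sqrt:
  assumes "finite S" "card S \<le> k"
  shows "wscore pav_weights N P S \<le> real (card N) * sqrt (2 * real k)"
proof -
  have "(\<Sum>j=1..card (P i \<inter> S). pav_weights j) \<le> sqrt (2 * real k)" for i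
  proof -
    have "card (P i \<inter> S) \<le> k"
      using assms card_mono[of S "P i \<inter> S"] by auto
    then show ?thesis
      using sum_pav_weights_mono sum_pav_weights_le_sqrt order_trans by blast
  qed
  then have "wscore pav_weights N P S \<le> (\<Sum>i\<in>N. sqrt (2 * real k))"
    unfolding wscore_def by (rule sum_mono)
  then show ?thesis by simp
qed

lemma wscore_pav_insert_gain:
  assumes "finite S" "c \<notin> S"
  shows "wscore pav_weights N P (S \<union> {c}) - wscore pav_weights N P S
    = (\<Sum>i\<in>N. if c \<in> P i then 1 / (real (card (P i \<inter> S)) + 1) else 0)"
  unfolding wscore_def sum_subtractf[symmetric]
proof (rule sum.cong)
  fix i
  show "(\<Sum>j=1..card (P i \<inter> (S \<union> {c})). pav_weights j) - (\<Sum>j=1..card (P i \<inter> S). pav_weights j)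
      = (if c \<in> P i then 1 / (real (card (P i \<inter> S)) + 1) else 0)"
  proof (cases "c \<in> P i")
    case True
    then have "P i \<inter> (S \<union> {c}) = insert c (P i \<inter> S)" by auto
    then have "card (P i \<inter> (S \<union> {c})) = Suc (card (P i \<inter> S))" using assms by simp
    then show ?thesis using True by (simp add: pav_weights_def)
  next
    case False
    then have "P i \<inter> (S \<union> {c}) = P i \<inter> S" by auto
    then show ?thesis using False by simp
  qed
qed simp

lemma inverse_ge_tangent:
  fixes L y :: real
  assumes "0 < L" "0 < y"
  shows "(2 * L - y) / L^2 \<le> 1 / y"
proof -
  have "L^2 - (2 * L - y) * y = (L - y)^2" by (simp add: power2_eq_square algebra_simps)
  then have "(2 * L - y) * y \<le> L^2" by (smt (verit) zero_le_power2)
  then show ?thesis using assms by (simp add: field_simps)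
qed

lemma avg_mono:
  assumes "S \<subseteq> T" "finite T"
  shows "avg P N' S \<le> avg P N' T"
  unfolding avg_def
  by (intro divide_right_mono sum_mono) (use assms in \<open>auto intro!: card_mono\<close>)

lemma cohesiveness_le_avg:
  assumes "finite N'" "N' \<noteq> {}" "finite S" "(\<Inter>i\<in>N'. P i) \<subseteq> S"
  shows "real (cohesiveness P N') \<le> avg P N' S"
proof -
  have "real (cohesiveness P N') \<le> real (card (P i \<inter> S))" if "i \<in> N'" for i
    unfolding cohesiveness_def using that assms by (intro of_nat_mono card_mono) auto
  then have "(\<Sum>i\<in>N'. real (cohesiveness P N')) \<le> (\<Sum>i\<in>N'. real (card (P i \<inter> S)))"
    by (rule sum_mono)
  moreover have "card N' > 0" using assms by (simp add: card_gt_0_iff)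
  ultimately show ?thesis unfolding avg_def by (simp add: field_simps)
qed

text \<open>Jensen's inequality for 1/(x+1), via its tangent line at x + 1 = \<lambda> + 1.\<close>

lemma sum_inverse_gt_if_avg_lt:
  assumes "finite N'" "N' \<noteq> {}" "avg P N' S < real lam"
  shows "real (card N') / (real lam + 1) < (\<Sum>i\<in>N'. 1 / (real (card (P i \<inter> S)) + 1))"
proof -
  define L where "L = real lam + 1"
  define n where "n = real (card N')"
  define x where "x i = real (card (P i \<inter> S))" for i
  have "0 < L" "0 < n" using assms unfolding L_def n_def by (auto simp: card_gt_0_iff)
  have sum_x: "(\<Sum>i\<in>N'. x i) = n * avg P N' S"
    unfolding avg_def n_def x_def using \<open>0 < n\<close> n_def by simp
  have "n / L = n * L / L^2" using \<open>0 < L\<close> by (simp add: power2_eq_square)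
  also have "\<dots> < (2 * L * n - n * avg P N' S - n) / L^2"
    using assms(3) \<open>0 < n\<close> \<open>0 < L\<close> unfolding L_def
    by (intro divide_strict_right_mono) (auto simp: algebra_simps)
  also have "\<dots> = (2 * L * n - (\<Sum>i\<in>N'. x i) - n) / L^2" by (simp add: sum_x)
  also have "\<dots> = (\<Sum>i\<in>N'. (2 * L - (x i + 1)) / L^2)"
    unfolding n_def by (simp add: sum_divide_distrib[symmetric] sum_subtractf sum.distrib)
  also have "\<dots> \<le> (\<Sum>i\<in>N'. 1 / (x i + 1))"
    using \<open>0 < L\<close> by (intro sum_mono inverse_ge_tangent) (auto simp: x_def)
  finally show ?thesis unfolding L_def n_def x_def .
qed

lemma seqpav_step_gain:
  assumes "is_profile N A P" "seqpav_output N A P r"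
    and "N' \<subseteq> N" "N' \<noteq> {}" "lam \<le> cohesiveness P N'"
    and "t < length r" "avg P N' (set (take t r)) < real lam"
  shows "real (card N') / (real lam + 1)
    < wscore pav_weights N P (set (take (Suc t) r)) - wscore pav_weights N P (set (take t r))"
proof -
  define S where "S = set (take t r)"
  define gain where "gain a = wscore pav_weights N P (S \<union> {a}) - wscore pav_weights N P S" for a
  have "finite N" "finite N'" "\<And>i. i \<in> N \<Longrightarrow> P i \<subseteq> A"
    using assms(1,3) finite_subset unfolding is_profile_def by auto
  have "\<not> (\<Inter>i\<in>N'. P i) \<subseteq> S"
  proof
    assume "(\<Inter>i\<in>N'. P i) \<subseteq> S"
    then have "real (cohesiveness P N') \<le> avg P N' S"
      using cohesiveness_le_avg[of N' S P] \<open>finite N'\<close> assms(4) unfolding S_def by blast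
    moreover have "real lam \<le> real (cohesiveness P N')" using assms(5) by simp
    ultimately show False using assms(7) unfolding S_def by linarith
  qed
  then obtain c where c: "\<forall>i\<in>N'. c \<in> P i" "c \<notin> S" by blast
  have "c \<in> A" using c(1) \<open>N' \<noteq> {}\<close> assms(3) \<open>\<And>i. i \<in> N \<Longrightarrow> P i \<subseteq> A\<close> by blast
  have "real (card N') / (real lam + 1) < (\<Sum>i\<in>N'. 1 / (real (card (P i \<inter> S)) + 1))"
    using sum_inverse_gt_if_avg_lt \<open>finite N'\<close> assms(4,7) unfolding S_def by blast
  also have "\<dots> = (\<Sum>i\<in>N'. if c \<in> P i then 1 / (real (card (P i \<inter> S)) + 1) else 0)"
    using c(1) by simp
  also have "\<dots> \<le> (\<Sum>i\<in>N. if c \<in> P i then 1 / (real (card (P i \<inter> S)) + 1) else 0)"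
    using \<open>finite N\<close> assms(3) by (intro sum_mono2) auto
  also have "\<dots> = gain c"
    using wscore_pav_insert_gain[of S c N P] c(2) unfolding gain_def S_def by simp
  also have "\<dots> \<le> gain (r ! t)"
    using assms(2,6) \<open>c \<in> A\<close> c(2)
    unfolding gain_def S_def seqpav_output_def wrav_output_def by blast
  also have "\<dots> = wscore pav_weights N P (set (take (Suc t) r)) - wscore pav_weights N P S"
    unfolding gain_def S_def using assms(6) by (simp add: take_Suc_conv_app_nth)
  finally show ?thesis unfolding S_def .
qed

lemma seqpav_prefix_score_gt:
  assumes "is_profile N A P" "seqpav_output N A P r"
    and "N' \<subseteq> N" "N' \<noteq> {}" "lam \<le> cohesiveness P N'"
    and "0 < k" "k \<le> length r" "avg P N' (set (take k r)) < real lam"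
  shows "real k * real (card N') / (real lam + 1) < wscore pav_weights N P (set (take k r))"
proof -
  define W where "W t = wscore pav_weights N P (set (take t r))" for t
  have "avg P N' (set (take t r)) < real lam" if "t < k" for t
    using avg_mono[of "set (take t r)" "set (take k r)" P N'] set_take_subset_set_take[of t k r]
      that assms(8) by simp
  then have "real (card N') / (real lam + 1) < W (Suc t) - W t" if "t < k" for t
    unfolding W_def using seqpav_step_gain[OF assms(1-5)] that assms(7) by simp
  then have "(\<Sum>t<k. real (card N') / (real lam + 1)) < (\<Sum>t<k. W (Suc t) - W t)"
    using assms(6) by (intro sum_strict_mono) auto
  also have "\<dots> = W k - W 0" by (rule sum_lessThan_telescope)
  also have "W 0 = 0" unfolding W_def wscore_def by simp
  finally show ?thesis unfolding W_def by simp
qed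

lemma seqpav_low_avg_prefix_bound:
  assumes "is_profile N A P" "seqpav_output N A P r"
    and "N' \<subseteq> N" "N' \<noteq> {}" "lam \<le> cohesiveness P N'"
    and "0 < k" "avg P N' (set (take k r)) < real lam"
  shows "real k * real (card N') / (real lam + 1) < real (card N) * sqrt (2 * real k)"
proof -
  define S where "S = set (take k r)"
  have "finite A" "\<forall>i\<in>N. P i \<subseteq> A" "finite N'"
    using assms(1,3) finite_subset unfolding is_profile_def by auto
  have "k \<le> length r"
  proof (rule ccontr)
    assume "\<not> k \<le> length r"
    then have "S = A"
      using assms(2) unfolding S_def seqpav_output_def wrav_output_def is_ranking_def by simp
    then have "real (cohesiveness P N') \<le> avg P N' S"
      using cohesiveness_le_avg[of N' S P] assms(3,4) \<open>finite N'\<close> \<open>finite A\<close>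
        \<open>\<forall>i\<in>N. P i \<subseteq> A\<close> by blast
    moreover have "real lam \<le> real (cohesiveness P N')" using assms(5) by simp
    ultimately show False using assms(7) unfolding S_def by linarith
  qed
  have "card S \<le> k" unfolding S_def using card_length[of "take k r"] by simp
  have "real k * real (card N') / (real lam + 1) < wscore pav_weights N P S"
    using seqpav_prefix_score_gt[OF assms(1-6) \<open>k \<le> length r\<close> assms(7)] unfolding S_def .
  also have "\<dots> \<le> real (card N) * sqrt (2 * real k)"
    using wscore_pav_le_sqrt \<open>card S \<le> k\<close> unfolding S_def by blast
  finally show ?thesis .
qed

lemma kappa_bound_contradiction:
  fixes \<alpha> L :: real
  assumes "0 < \<alpha>" "0 < L" "0 < k" "2 * L^2 / \<alpha>^2 \<le> real k"
  shows "\<not> real k * \<alpha> / L < sqrt (2 * real k)"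
proof
  assume lt: "real k * \<alpha> / L < sqrt (2 * real k)"
  have "(real k * \<alpha> / L)^2 < (sqrt (2 * real k))^2"
    using lt assms by (intro power_strict_mono) auto
  then have "real k * real k * \<alpha>^2 < 2 * real k * L^2"
    using assms by (simp add: field_simps power2_eq_square)
  then have "real k * \<alpha>^2 < 2 * L^2" using assms(3) by (simp add: mult.assoc)
  moreover have "2 * L^2 \<le> real k * \<alpha>^2" using assms(1,4) by (simp add: field_simps)
  ultimately show False by simp
qed

theorem theorem4:
  fixes N :: "'v set" and A :: "'a set" and P :: "'v \<Rightarrow> 'a set"
    and r :: "'a list" and \<alpha> :: real and lam :: nat and N' :: "'v set"
  assumes "\<alpha> \<in> \<rat>" and "0 < \<alpha>" and "\<alpha> \<le> 1"
    and "is_profile N A P"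
    and "seqpav_output N A P r"
    and "significant N P \<alpha> lam N'"
  shows "avg P N' (prefix_set r (nat \<lceil>2 * (real lam + 1)^2 / \<alpha>^2\<rceil>)) \<ge> real lam"
proof (rule ccontr)
  define k where "k = nat \<lceil>2 * (real lam + 1)^2 / \<alpha>^2\<rceil>"
  assume "\<not> ?thesis"
  then have avg_lt: "avg P N' (set (take k r)) < real lam" unfolding k_def prefix_set_def by simp
  have N: "finite N" "N \<noteq> {}" using assms(4) unfolding is_profile_def by auto
  have N': "N' \<subseteq> N" "N' \<noteq> {}" "lam \<le> cohesiveness P N'"
    "\<alpha> * real (card N) \<le> real (card N')"
    using assms(6) unfolding significant_def cohesiveness_def by (auto, linarith)
  have "0 < k" unfolding k_def using assms(2) by simp
  have "real (card N) * (real k * \<alpha> / (real lam + 1))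
      = real k * (\<alpha> * real (card N)) / (real lam + 1)" by simp
  also have "\<dots> \<le> real k * real (card N') / (real lam + 1)"
    using N'(4) by (intro divide_right_mono mult_left_mono) auto
  also have "\<dots> < real (card N) * sqrt (2 * real k)"
    using seqpav_low_avg_prefix_bound[OF assms(4,5) N'(1-3) \<open>0 < k\<close> avg_lt] .
  finally have "real k * \<alpha> / (real lam + 1) < sqrt (2 * real k)"
    using mult_less_cancel_left_pos[of "real (card N)"] N
    by (simp add: card_gt_0_iff del: times_divide_eq_right)
  moreover have "2 * (real lam + 1)^2 / \<alpha>^2 \<le> real k" unfolding k_def by linarith
  ultimately show False using kappa_bound_contradiction assms(2) \<open>0 < k\<close> by force
qed

end
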